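(* Let $\mathcal{N}_{A\to B}$ be a quantum channel between finite-dimensional systems, let $\varepsilon\in[0,1]$ and let $k\ge1$ be an integer. Then $$C^{\varepsilon}(\mathcal{N}_{A\to B})\le -\log_2\inf\lambda,$$ where the infimum is over $\lambda\ge0$, quantum states $\rho_A$, and operators $\{Q^{y_1^k}_{AB_1^k}\}_{y_1^k\in\{0,1\}^k}$ on $A B_1\cdots B_k$ (each $B_i\cong B$) subject to: (1) $\sum_{y_1^k\in\{0,1\}^k}Q^{y_1^k}_{AB_1^k}=\rho_A\otimes I_{B_1^k}$; (2) $Q^{y_1^k}_{AB_1^k}\ge0$ for all $y_1^k$; (3) $W^\pi_{B_1^k}Q^{(y_{\pi(1)},\dots,y_{\pi(k)})}_{AB_1^k}(W^\pi_{B_1^k})^\dagger=Q^{y_1^k}_{AB_1^k}$ for all $\pi\in S_k$ and all $y_1^k$; (4) $T_{B_1^i}(Q^{y_1^k}_{AB_1^k})\ge0$ for all $i\in[k]$ and all $y_1^k$; (5) $\sum_{y_2^k}\operatorname{Tr}_A[Q^{(0,y_2,\dots,y_k)}_{AB_1^k}]\le\lambda I_{B_1^k}$; (6) $\sum_{y_k}\operatorname{Tr}_A[Q^{y_1^k}_{AB_1^k}]=\frac{1}{|B|}\sum_{y_k}\operatorname{Tr}_{AB_k}[Q^{y_1^k}_{AB_1^k}]\otimes I_{B_k}$ for all $y_1^{k-1}\in\{0,1\}^{k-1}$; (7) $\frac{1}{|B|^{k-1}}\sum_{y_2^k}\operatorname{Tr}\big[Q^{(0,y_2,\dots,y_k)}_{AB_1^k}(\Gamma^{\mathcal{N}}_{AB_1}\otimes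 I_{B_2^k})\big]\ge1-\varepsilon$.
   Context: Notation: $y_i^j=(y_i,\dots,y_j)$, $B_i^j=B_i\cdots B_j$; $W^\pi_{B_1^k}$ is the unitary permuting systems $B_1,\dots,B_k$ according to $\pi\in S_k$; $T_{B_1^i}$ denotes the partial transpose (in the standard basis) on systems $B_1,\dots,B_i$. The Choi operator is $\Gamma^{\mathcal{N}}_{AB}=\sum_{i,j=0}^{|A|-1}|i\rangle\!\langle j|_A\otimes\mathcal{N}(|i\rangle\!\langle j|)_B$ (with the reference system identified with $A$). One-shot classical capacity: for a finite message set $\mathcal{X}$, an encoding classical-quantum channel $\mathcal{E}_{X\to A}$ (i.e., states $\rho^x_A=\mathcal{E}(|x\rangle\!\langle x|)$) and a decoding POVM $\{\Lambda^{\hat x}_B\}_{\hat x\in\mathcal{X}}$, the maximal error probability is $p_{\rm err}=\max_{x\in\mathcal{X}}\sum_{\hat x\ne x}\operatorname{Tr}[\Lambda^{\hat x}_B\mathcal{N}(\rho^x_A)]$, and $C^\varepsilon(\mathcal{N})=\sup\{\log_2|\mathcal{X}|: p_{\rm err}\le\varepsilon\}$ over all $\mathcal{X},\mathcal{E},\{\Lambda^{\hat x}\}$. *)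

theory Defs
  imports "HOL-Analysis.Analysis" "HOL-Library.Complex_Order" "HOL-Combinatorics.Permutations"
begin

text \<open>An operator on a finite-dimensional system with orthonormal basis indexed by a finite
  set I is a function X :: 'i => 'i => complex (matrix entries X i j = <i|X|j>);
  only the entries on I x I are relevant.  Complex numbers are ordered as in
  HOL-Library.Complex_Order (z >= 0 iff z is real and nonnegative).\<close>

definition delta :: "'i \<Rightarrow> 'i \<Rightarrow> complex" where
  "delta i j = (if i = j then 1 else 0)"

definition trace_on :: "'i set \<Rightarrow> ('i \<Rightarrow> 'i \<Rightarrow> complex) \<Rightarrow> complex" where
  "trace_on I X = (\<Sum>i\<in>I. X i i)"

definition mmult_on :: "'i set \<Rightarrow> ('i \<Rightarrow> 'i \<Rightarrow> complex) \<Rightarrow> ('i \<Rightarrow> 'i \<Rightarrow> complex) \<Rightarrow> ('i \<Rightarrow> 'i \<Rightarrow> complex)" where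
  "mmult_on I X Y = (\<lambda>i j. \<Sum>l\<in>I. X i l * Y l j)"

definition psd_on :: "'i set \<Rightarrow> ('i \<Rightarrow> 'i \<Rightarrow> complex) \<Rightarrow> bool" where
  "psd_on I X \<longleftrightarrow> (\<forall>v :: 'i \<Rightarrow> complex. 0 \<le> (\<Sum>i\<in>I. \<Sum>j\<in>I. cnj (v i) * X i j * v j))"

definition is_state_on :: "'i set \<Rightarrow> ('i \<Rightarrow> 'i \<Rightarrow> complex) \<Rightarrow> bool" where
  "is_state_on I \<rho> \<longleftrightarrow> psd_on I \<rho> \<and> trace_on I \<rho> = 1"

text \<open>A linear map N from operators on A (dimension dA, basis {..<dA}) to operators on B
  (dimension dB, basis {..<dB}) is given by its values on matrix units:
  N i j = N(|i><j|), a dB x dB matrix.\<close>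

type_synonym chan = "nat \<Rightarrow> nat \<Rightarrow> nat \<Rightarrow> nat \<Rightarrow> complex"

definition apply_chan :: "nat \<Rightarrow> chan \<Rightarrow> (nat \<Rightarrow> nat \<Rightarrow> complex) \<Rightarrow> (nat \<Rightarrow> nat \<Rightarrow> complex)" where
  "apply_chan dA N X = (\<lambda>b b'. \<Sum>i<dA. \<Sum>j<dA. X i j * N i j b b')"

definition completely_positive :: "nat \<Rightarrow> nat \<Rightarrow> chan \<Rightarrow> bool" where
  "completely_positive dA dB N \<longleftrightarrow>
     (\<forall>(n::nat) (X :: nat \<times> nat \<Rightarrow> nat \<times> nat \<Rightarrow> complex).
        psd_on ({..<n} \<times> {..<dA}) X \<longrightarrow>
        psd_on ({..<n} \<times> {..<dB})
          (\<lambda>(r, b) (r', b'). \<Sum>i<dA. \<Sum>j<dA. X (r, i) (r', j) * N i j b b'))"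

definition trace_preserving :: "nat \<Rightarrow> nat \<Rightarrow> chan \<Rightarrow> bool" where
  "trace_preserving dA dB N \<longleftrightarrow>
     (\<forall>i<dA. \<forall>j<dA. trace_on {..<dB} (N i j) = delta i j)"

definition quantum_channel :: "nat \<Rightarrow> nat \<Rightarrow> chan \<Rightarrow> bool" where
  "quantum_channel dA dB N \<longleftrightarrow> completely_positive dA dB N \<and> trace_preserving dA dB N"

text \<open>Choi operator Gamma_{AB} = sum_{i,j} |i><j|_A (x) N(|i><j|)_B, basis pairs (a,b).\<close>
definition choi :: "chan \<Rightarrow> (nat \<times> nat \<Rightarrow> nat \<times> nat \<Rightarrow> complex)" where
  "choi N = (\<lambda>(a, b) (a', b'). N a a' b b')"

definition povm_on :: "'i set \<Rightarrow> nat \<Rightarrow> (nat \<Rightarrow> 'i \<Rightarrow> 'i \<Rightarrow> complex) \<Rightarrow> bool" where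
  "povm_on I M Lam \<longleftrightarrow> (\<forall>x<M. psd_on I (Lam x)) \<and>
     (\<forall>i\<in>I. \<forall>j\<in>I. (\<Sum>x<M. Lam x i j) = delta i j)"

definition max_err_prob :: "nat \<Rightarrow> nat \<Rightarrow> chan \<Rightarrow> nat \<Rightarrow> (nat \<Rightarrow> nat \<Rightarrow> nat \<Rightarrow> complex)
    \<Rightarrow> (nat \<Rightarrow> nat \<Rightarrow> nat \<Rightarrow> complex) \<Rightarrow> real" where
  "max_err_prob dA dB N M \<rho> Lam =
     Max ((\<lambda>x. Re (\<Sum>xh\<in>{..<M} - {x}.
              trace_on {..<dB} (mmult_on {..<dB} (Lam xh) (apply_chan dA N (\<rho> x))))) ` {..<M})"

definition achievable :: "nat \<Rightarrow> nat \<Rightarrow> chan \<Rightarrow> real \<Rightarrow> nat \<Rightarrow> bool" where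
  "achievable dA dB N \<epsilon> M \<longleftrightarrow> 1 \<le> M \<and>
     (\<exists>\<rho> Lam. (\<forall>x<M. is_state_on {..<dA} (\<rho> x)) \<and> povm_on {..<dB} M Lam \<and>
              max_err_prob dA dB N M \<rho> Lam \<le> \<epsilon>)"

definition one_shot_capacity :: "nat \<Rightarrow> nat \<Rightarrow> chan \<Rightarrow> real \<Rightarrow> ereal" where
  "one_shot_capacity dA dB N \<epsilon> = (SUP M\<in>{M. achievable dA dB N \<epsilon> M}. ereal (log 2 (real M)))"

text \<open>Basis of B_1...B_n: lists bs of length n with entries < dB (bs ! (i-1) is the B_i index).
  Basis of A B_1...B_k: pairs (a, bs).  Bit strings y_1^k: nat lists with entries in {0,1}.\<close>

definition idxB :: "nat \<Rightarrow> nat \<Rightarrow> nat list set" where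
  "idxB dB n = {bs. length bs = n \<and> (\<forall>b\<in>set bs. b < dB)}"

definition idxAB :: "nat \<Rightarrow> nat \<Rightarrow> nat \<Rightarrow> (nat \<times> nat list) set" where
  "idxAB dA dB n = {..<dA} \<times> idxB dB n"

definition bitstrings :: "nat \<Rightarrow> nat list set" where
  "bitstrings n = {ys. length ys = n \<and> set ys \<subseteq> {0, 1}}"

type_synonym opAB = "nat \<times> nat list \<Rightarrow> nat \<times> nat list \<Rightarrow> complex"

definition permute_list_by :: "(nat \<Rightarrow> nat) \<Rightarrow> 'a list \<Rightarrow> 'a list" where
  "permute_list_by \<pi> xs = map (\<lambda>j. xs ! \<pi> j) [0..<length xs]"

text \<open>W^pi X W^pi^dagger, where W^pi moves system B_i to position pi(i):
  W^pi |b_1...b_k> = |b_{pi^-1(1)} ... b_{pi^-1(k)}>, so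
  <cs|W X W^dagger|cs'> = <cs o pi| X |cs' o pi>.\<close>
definition conj_perm :: "(nat \<Rightarrow> nat) \<Rightarrow> opAB \<Rightarrow> opAB" where
  "conj_perm \<pi> X = (\<lambda>(a, cs) (a', cs'). X (a, permute_list_by \<pi> cs) (a', permute_list_by \<pi> cs'))"

text \<open>Partial transpose on B_1...B_i (standard basis).\<close>
definition ptrans :: "nat \<Rightarrow> opAB \<Rightarrow> opAB" where
  "ptrans i X = (\<lambda>(a, bs) (a', bs'). X (a, take i bs' @ drop i bs) (a', take i bs @ drop i bs'))"

definition ptrace_A :: "nat \<Rightarrow> opAB \<Rightarrow> (nat list \<Rightarrow> nat list \<Rightarrow> complex)" where
  "ptrace_A dA X = (\<lambda>bs bs'. \<Sum>a<dA. X (a, bs) (a, bs'))"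

definition ptrace_ABk_tensor_I :: "nat \<Rightarrow> nat \<Rightarrow> opAB \<Rightarrow> (nat list \<Rightarrow> nat list \<Rightarrow> complex)" where
  "ptrace_ABk_tensor_I dA dB X = (\<lambda>bs bs'.
      (\<Sum>a<dA. \<Sum>c<dB. X (a, butlast bs @ [c]) (a, butlast bs' @ [c])) * delta (last bs) (last bs'))"

definition choi_ext :: "chan \<Rightarrow> opAB" where
  "choi_ext N = (\<lambda>(a, bs) (a', bs'). choi N (a, hd bs) (a', hd bs') * delta (tl bs) (tl bs'))"

definition feasible :: "nat \<Rightarrow> nat \<Rightarrow> chan \<Rightarrow> real \<Rightarrow> nat \<Rightarrow> real
     \<Rightarrow> (nat \<Rightarrow> nat \<Rightarrow> complex) \<Rightarrow> (nat list \<Rightarrow> opAB) \<Rightarrow> bool" where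
  "feasible dA dB N \<epsilon> k lam \<rho> Q \<longleftrightarrow>
     0 \<le> lam \<and> is_state_on {..<dA} \<rho> \<and>
     \<comment> \<open>(1)\<close>
     (\<forall>(a, bs)\<in>idxAB dA dB k. \<forall>(a', bs')\<in>idxAB dA dB k.
        (\<Sum>y\<in>bitstrings k. Q y (a, bs) (a', bs')) = \<rho> a a' * delta bs bs') \<and>
     \<comment> \<open>(2)\<close>
     (\<forall>y\<in>bitstrings k. psd_on (idxAB dA dB k) (Q y)) \<and>
     \<comment> \<open>(3)\<close>
     (\<forall>\<pi>. \<pi> permutes {..<k} \<longrightarrow> (\<forall>y\<in>bitstrings k.
        (\<forall>p\<in>idxAB dA dB k. \<forall>p'\<in>idxAB dA dB k.
           conj_perm \<pi> (Q (permute_list_by \<pi> y)) p p' = Q y p p'))) \<and>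
     \<comment> \<open>(4)\<close>
     (\<forall>i\<in>{1..k}. \<forall>y\<in>bitstrings k. psd_on (idxAB dA dB k) (ptrans i (Q y))) \<and>
     \<comment> \<open>(5)\<close>
     psd_on (idxB dB k) (\<lambda>bs bs'. complex_of_real lam * delta bs bs' -
        (\<Sum>y'\<in>bitstrings (k - 1). ptrace_A dA (Q (0 # y')) bs bs')) \<and>
     \<comment> \<open>(6)\<close>
     (\<forall>y'\<in>bitstrings (k - 1). \<forall>bs\<in>idxB dB k. \<forall>bs'\<in>idxB dB k.
        (\<Sum>yk\<in>{0, 1}. ptrace_A dA (Q (y' @ [yk])) bs bs') =
        (1 / of_nat dB) * (\<Sum>yk\<in>{0, 1}. ptrace_ABk_tensor_I dA dB (Q (y' @ [yk])) bs bs')) \<and>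
     \<comment> \<open>(7)\<close>
     complex_of_real (1 - \<epsilon>) \<le>
       (1 / of_nat dB ^ (k - 1)) * (\<Sum>y'\<in>bitstrings (k - 1).
          trace_on (idxAB dA dB k) (mmult_on (idxAB dA dB k) (Q (0 # y')) (choi_ext N)))"

definition neg_log2 :: "ereal \<Rightarrow> ereal" where
  "neg_log2 L = (if L = 0 then \<infinity> else if L = \<infinity> then -\<infinity>
                 else ereal (- log 2 (real_of_ereal L)))"

definition sdp_bound :: "nat \<Rightarrow> nat \<Rightarrow> chan \<Rightarrow> real \<Rightarrow> nat \<Rightarrow> ereal" where
  "sdp_bound dA dB N \<epsilon> k =
     neg_log2 (INF lam\<in>{lam. \<exists>\<rho> Q. feasible dA dB N \<epsilon> k lam \<rho> Q}. ereal lam)"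

end

theory Submission
  imports Defs
begin

text \<open>Let a code with \<open>M\<close> messages have encoding states \<open>\<rho>\<^sub>x\<close> and decoding POVM
  \<open>\<Lambda>\<^sub>x\<close> with maximal error at most \<open>\<epsilon>\<close>. Put \<open>\<Lambda>\<^sub>x(0) = \<Lambda>\<^sub>x\<close>,
  \<open>\<Lambda>\<^sub>x(1) = I - \<Lambda>\<^sub>x\<close> and
  \<open>\<rho>\<^sub>A = (1/M) \<Sum>\<^sub>x \<rho>\<^sub>x\<^sup>T\<close>,
  \<open>Q\<^sup>y = (1/M) \<Sum>\<^sub>x \<rho>\<^sub>x\<^sup>T \<otimes> \<Lambda>\<^sub>x(y\<^sub>1) \<otimes> \<dots> \<otimes> \<Lambda>\<^sub>x(y\<^sub>k)\<close>.
  These are feasible with \<open>\<lambda> = 1/M\<close>, so the infimum is at most \<open>1/M\<close> and the bound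
  at least \<open>log\<^sub>2 M\<close>. Tensor products of positive operators are positive, also after transposing
  some of the factors, which gives (2) and (4); (3) holds because \<open>Q\<^sup>y\<close> is built factor by
  factor from \<open>y\<close>; (1), (5) and (6) follow from \<open>\<Lambda>\<^sub>x(0) + \<Lambda>\<^sub>x(1) = I\<close> and
  \<open>\<Sum>\<^sub>x \<Lambda>\<^sub>x = I\<close>; and the left-hand side of (7) is the average success probability
  \<open>(1/M) \<Sum>\<^sub>x Tr[\<Lambda>\<^sub>x N(\<rho>\<^sub>x)]\<close>, because
  \<open>Tr[(\<rho>\<^sup>T \<otimes> \<Lambda>) \<Gamma>\<^sup>N] = Tr[\<Lambda> N(\<rho>)]\<close>.\<close>

section \<open>Positive semidefinite operators\<close>

definition qform_on :: "'i set \<Rightarrow> ('i \<Rightarrow> 'i \<Rightarrow> complex) \<Rightarrow> ('i \<Rightarrow> complex) \<Rightarrow> complex" where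
  "qform_on I X v = (\<Sum>i\<in>I. \<Sum>j\<in>I. cnj (v i) * X i j * v j)"

lemma psd_on_iff_qform_on: "psd_on I X \<longleftrightarrow> (\<forall>v. 0 \<le> qform_on I X v)"
  by (simp add: psd_on_def qform_on_def)

lemma qform_on_cong:
  "(\<And>i j. i \<in> I \<Longrightarrow> j \<in> I \<Longrightarrow> X i j = Y i j) \<Longrightarrow> (\<And>i. i \<in> I \<Longrightarrow> v i = u i)
    \<Longrightarrow> qform_on I X v = qform_on I Y u"
  unfolding qform_on_def by (intro sum.cong refl) auto

lemma psd_on_cong:
  "(\<And>i j. i \<in> I \<Longrightarrow> j \<in> I \<Longrightarrow> X i j = Y i j) \<Longrightarrow> psd_on I X \<longleftrightarrow> psd_on I Y"
  unfolding psd_on_iff_qform_on using qform_on_cong[of I X Y] by metis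

lemma psd_on_eqI: "psd_on I X \<Longrightarrow> (\<And>i j. i \<in> I \<Longrightarrow> j \<in> I \<Longrightarrow> X i j = Y i j) \<Longrightarrow> psd_on I Y"
  using psd_on_cong by blast

lemma qform_on_insert:
  assumes "finite F" "i0 \<notin> F"
  shows "qform_on (insert i0 F) X v = cnj (v i0) * X i0 i0 * v i0 + cnj (v i0) * (\<Sum>j\<in>F. X i0 j * v j)
    + (\<Sum>i\<in>F. cnj (v i) * X i i0) * v i0 + qform_on F X v"
  using assms
  by (simp add: qform_on_def sum.distrib sum_distrib_left sum_distrib_right mult_ac)

lemma qform_on_mono_support:
  assumes "finite I" "S \<subseteq> I" "\<And>i. i \<in> I - S \<Longrightarrow> v i = 0"
  shows "qform_on I X v = qform_on S X v"
proof -
  have "qform_on I X v = (\<Sum>i\<in>I. \<Sum>j\<in>S. cnj (v i) * X i j * v j)"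
    unfolding qform_on_def
    by (intro sum.cong refl sum.mono_neutral_right) (use assms in auto)
  also have "\<dots> = qform_on S X v"
    unfolding qform_on_def by (rule sum.mono_neutral_right) (use assms in auto)
  finally show ?thesis .
qed

lemma psd_on_subset:
  assumes "finite I" "S \<subseteq> I" "psd_on I X"
  shows "psd_on S X"
  unfolding psd_on_iff_qform_on
proof
  fix v :: "_ \<Rightarrow> complex"
  let ?u = "\<lambda>i. if i \<in> S then v i else 0"
  have "qform_on I X ?u = qform_on S X v"
    by (subst qform_on_mono_support[OF assms(1,2)]) (auto intro: qform_on_cong)
  then show "0 \<le> qform_on S X v"
    using assms(3) unfolding psd_on_iff_qform_on by metis
qed

lemma psd_on_reindex:
  assumes "finite I" "inj_on f J" "f ` J \<subseteq> I" "psd_on I X"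
  shows "psd_on J (\<lambda>j j'. X (f j) (f j'))"
  unfolding psd_on_iff_qform_on
proof
  fix v :: "_ \<Rightarrow> complex"
  let ?u = "\<lambda>i. v (the_inv_into J f i)"
  have "qform_on J (\<lambda>j j'. X (f j) (f j')) v = qform_on (f ` J) X ?u"
    unfolding qform_on_def using assms(2)
    by (simp add: sum.reindex the_inv_into_f_f)
  moreover have "psd_on (f ` J) X" by (rule psd_on_subset[OF assms(1,3,4)])
  ultimately show "0 \<le> qform_on J (\<lambda>j j'. X (f j) (f j')) v"
    unfolding psd_on_iff_qform_on by metis
qed

lemma qform_on_two:
  assumes "finite I" "i \<in> I" "j \<in> I" "i \<noteq> j"
  shows "qform_on I X (\<lambda>l. if l = i then s else if l = j then t else 0)
    = cnj s * X i i * s + cnj s * X i j * t + cnj t * X j i * s + cnj t * X j j * t"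
  using assms
  by (subst qform_on_mono_support[of I "{i, j}"]) (auto simp: qform_on_def)

lemma psd_on_diag_nonneg:
  assumes "finite I" "psd_on I X" "i \<in> I"
  shows "0 \<le> X i i"
proof -
  have "qform_on I X (\<lambda>l. if l = i then 1 else 0) = X i i"
    using assms by (subst qform_on_mono_support[of I "{i}"]) (auto simp: qform_on_def)
  then show ?thesis using assms(2) unfolding psd_on_iff_qform_on by metis
qed

lemma psd_on_hermitian:
  assumes "finite I" "psd_on I X" "i \<in> I" "j \<in> I"
  shows "X j i = cnj (X i j)"
proof (cases "i = j")
  case True
  then show ?thesis
    using psd_on_diag_nonneg[OF assms(1-3)] by (simp add: complex_eq_iff less_eq_complex_def)
next
  case False
  have real_diag: "Im (X i i) = 0" "Im (X j j) = 0"
    using psd_on_diag_nonneg[OF assms(1,2)] assms(3,4) by (auto simp: less_eq_complex_def)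
  have "0 \<le> qform_on I X (\<lambda>l. if l = i then 1 else if l = j then 1 else 0)"
    "0 \<le> qform_on I X (\<lambda>l. if l = i then 1 else if l = j then \<i> else 0)"
    using assms(2) unfolding psd_on_iff_qform_on by blast+
  then show ?thesis
    using real_diag unfolding qform_on_two[OF assms(1,3,4) False]
    by (simp add: less_eq_complex_def complex_eq_iff algebra_simps)
qed

lemma psd_on_zero_diag_row:
  assumes "finite I" "psd_on I X" "i \<in> I" "j \<in> I" "X i i = 0"
  shows "X i j = 0"
proof (rule ccontr)
  assume nz: "X i j \<noteq> 0"
  then have "i \<noteq> j" using assms(5) by auto
  \<comment> \<open>the test vector \<open>(-r X\<^sub>i\<^sub>j, 1)\<close> gives \<open>X\<^sub>j\<^sub>j - 2 r |X\<^sub>i\<^sub>j|\<^sup>2\<close>, negative for large \<open>r\<close>\<close>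
  define r where "r = (Re (X j j) + 1) / (2 * (cmod (X i j))\<^sup>2)"
  have r: "r * (2 * (cmod (X i j))\<^sup>2) = Re (X j j) + 1"
    unfolding r_def using nz by simp
  have herm: "X j i = cnj (X i j)" by (rule psd_on_hermitian[OF assms(1-4)])
  have sq: "cnj (X i j) * X i j = of_real ((cmod (X i j))\<^sup>2)"
    by (simp add: complex_norm_square mult.commute del: of_real_power)
  have "0 \<le> qform_on I X (\<lambda>l. if l = i then - (of_real r * X i j) else if l = j then 1 else 0)"
    using assms(2) unfolding psd_on_iff_qform_on by blast
  also have "\<dots> = X j j - 2 * of_real r * (cnj (X i j) * X i j)"
    unfolding qform_on_two[OF assms(1,3,4) \<open>i \<noteq> j\<close>] using assms(5) herm
    by (simp add: algebra_simps)
  finally have "0 \<le> Re (X j j) - r * (2 * (cmod (X i j))\<^sup>2)"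
    unfolding sq by (simp add: less_eq_complex_def algebra_simps)
  with r show False by simp
qed

lemma psd_on_schur_complement:
  assumes "finite F" "i0 \<notin> F" "psd_on (insert i0 F) X" "X i0 i0 \<noteq> 0"
  shows "psd_on F (\<lambda>i j. X i j - X i i0 * X i0 j / X i0 i0)"
  unfolding psd_on_iff_qform_on
proof
  fix v :: "_ \<Rightarrow> complex"
  define d where "d = X i0 i0"
  define s where "s = (\<Sum>j\<in>F. X i0 j * v j)"
  define t where "t = - s / d"
  have fin: "finite (insert i0 F)" using assms(1) by simp
  have cnj_d: "cnj d = d"
    unfolding d_def by (rule sym, rule psd_on_hermitian[OF fin assms(3)]) simp_all
  have col: "(\<Sum>i\<in>F. cnj (v i) * X i i0) = cnj s"
    unfolding s_def cnj_sum
  proof (intro sum.cong refl)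
    fix i assume "i \<in> F"
    then have "X i i0 = cnj (X i0 i)" by (intro psd_on_hermitian[OF fin assms(3)]) auto
    then show "cnj (v i) * X i i0 = cnj (X i0 i * v i)" by simp
  qed
  have "qform_on F (\<lambda>i j. X i j - X i i0 * X i0 j / X i0 i0) v
      = (\<Sum>i\<in>F. \<Sum>j\<in>F. cnj (v i) * X i j * v j - (cnj (v i) * X i i0) * (X i0 j * v j) / d)"
    unfolding qform_on_def d_def by (intro sum.cong refl) (simp add: algebra_simps)
  also have "\<dots> = qform_on F X v - (\<Sum>i\<in>F. cnj (v i) * X i i0) * s / d"
    unfolding qform_on_def s_def sum_subtractf sum_product sum_divide_distrib ..
  also have "\<dots> = cnj t * d * t + cnj t * s + cnj s * t + qform_on F X v"
    unfolding col t_def using assms(4) cnj_d by (simp add: d_def field_simps)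
  also have "\<dots> = qform_on (insert i0 F) X (v(i0 := t))"
  proof -
    have "(\<Sum>j\<in>F. X i0 j * (v(i0 := t)) j) = s" "qform_on F X (v(i0 := t)) = qform_on F X v"
      using assms(2) unfolding s_def by (auto intro!: sum.cong qform_on_cong)
    moreover have "(\<Sum>i\<in>F. cnj ((v(i0 := t)) i) * X i i0) = cnj s"
      unfolding col[symmetric] using assms(2) by (auto intro!: sum.cong)
    ultimately show ?thesis unfolding qform_on_insert[OF assms(1,2)] d_def by simp
  qed
  also have "0 \<le> \<dots>" using assms(3) unfolding psd_on_iff_qform_on by blast
  finally show "0 \<le> qform_on F (\<lambda>i j. X i j - X i i0 * X i0 j / X i0 i0) v" .
qed

lemma psd_on_rank_one_split:
  assumes "finite F" "i0 \<notin> F" "psd_on (insert i0 F) X"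
  obtains c where "psd_on F (\<lambda>i j. X i j - c i * cnj (c j))"
    and "\<And>j. j \<in> insert i0 F \<Longrightarrow> X i0 j = c i0 * cnj (c j)"
    and "\<And>j. j \<in> insert i0 F \<Longrightarrow> X j i0 = c j * cnj (c i0)"
proof (cases "X i0 i0 = 0")
  case True
  have fin: "finite (insert i0 F)" using assms(1) by simp
  have row: "X i0 j = 0" and col: "X j i0 = 0" if "j \<in> insert i0 F" for j
    using psd_on_zero_diag_row[OF fin assms(3) _ that True]
      psd_on_hermitian[OF fin assms(3) _ that] by auto
  show ?thesis
    by (rule that[of "\<lambda>_. 0"]) (use psd_on_subset[OF fin _ assms(3)] row col in auto)
next
  case False
  have fin: "finite (insert i0 F)" using assms(1) by simp
  have herm: "\<And>i j. i \<in> insert i0 F \<Longrightarrow> j \<in> insert i0 F \<Longrightarrow> X j i = cnj (X i j)"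
    by (rule psd_on_hermitian[OF fin assms(3)])
  define d where "d = Re (X i0 i0)"
  have "0 \<le> X i0 i0" by (rule psd_on_diag_nonneg[OF fin assms(3)]) simp
  then have X_d: "X i0 i0 = of_real d" and "0 < d"
    using False unfolding d_def by (auto simp: less_eq_complex_def complex_eq_iff)
  define c where "c i = X i i0 / of_real (sqrt d)" for i
  have c_outer: "c i * cnj (c j) = X i i0 * X i0 j / X i0 i0" if "j \<in> insert i0 F" for i j
    using herm[of i0 j] that \<open>0 < d\<close> unfolding c_def X_d
    by (simp add: field_simps flip: of_real_mult)
  show ?thesis
  proof (rule that[of c])
    show "psd_on F (\<lambda>i j. X i j - c i * cnj (c j))"
      using psd_on_schur_complement[OF assms False] by (rule psd_on_eqI) (simp add: c_outer)
  qed (use c_outer False in simp_all)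
qed

lemma psd_on_gram_decomposition:
  fixes X :: "'i \<Rightarrow> 'i \<Rightarrow> complex"
  assumes "finite I" "psd_on I X"
  obtains m :: nat and w :: "nat \<Rightarrow> 'i \<Rightarrow> complex"
  where "\<And>i j. i \<in> I \<Longrightarrow> j \<in> I \<Longrightarrow> X i j = (\<Sum>l<m. w l i * cnj (w l j))"
  using assms
proof (induction I arbitrary: X thesis rule: finite_induct)
  case empty
  then show ?case by blast
next
  case (insert i0 F)
  obtain c where psd: "psd_on F (\<lambda>i j. X i j - c i * cnj (c j))"
    and row: "\<And>j. j \<in> insert i0 F \<Longrightarrow> X i0 j = c i0 * cnj (c j)"
    and col: "\<And>j. j \<in> insert i0 F \<Longrightarrow> X j i0 = c j * cnj (c i0)"
    using psd_on_rank_one_split[OF insert.hyps insert.prems(2)] by blast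
  obtain m :: nat and w
    where w: "\<And>i j. i \<in> F \<Longrightarrow> j \<in> F \<Longrightarrow> X i j - c i * cnj (c j) = (\<Sum>l<m. w l i * cnj (w l j))"
    using insert.IH[OF _ psd] by blast
  define w' where "w' l i = (if l = m then c i else if i = i0 then 0 else w l i)" for l i
  show ?case
  proof (rule insert.prems(1)[where m = "Suc m" and w = w'])
    fix i j assume i: "i \<in> insert i0 F" and j: "j \<in> insert i0 F"
    have "(\<Sum>l<Suc m. w' l i * cnj (w' l j))
        = (if i = i0 \<or> j = i0 then 0 else \<Sum>l<m. w l i * cnj (w l j)) + c i * cnj (c j)"
      by (simp add: w'_def)
    also have "\<dots> = X i j"
      using i j row col w[of i j] by (auto simp: diff_eq_eq)
    finally show "X i j = (\<Sum>l<Suc m. w' l i * cnj (w' l j))" ..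
  qed
qed

lemma psd_on_gram: "finite L \<Longrightarrow> psd_on I (\<lambda>i j. \<Sum>l\<in>L. w l i * cnj (w l j))"
  unfolding psd_on_iff_qform_on
proof
  fix v :: "_ \<Rightarrow> complex"
  define z where "z l = (\<Sum>i\<in>I. cnj (v i) * w l i)" for l
  have "qform_on I (\<lambda>i j. \<Sum>l\<in>L. w l i * cnj (w l j)) v = (\<Sum>l\<in>L. z l * cnj (z l))"
    unfolding qform_on_def z_def cnj_sum sum_product
    by (simp add: sum_distrib_left sum_distrib_right mult_ac sum.swap[of _ L])
  also have "\<dots> = (\<Sum>l\<in>L. of_real ((cmod (z l))\<^sup>2))"
    by (simp add: complex_norm_square del: of_real_power)
  also have "0 \<le> \<dots>" by (intro sum_nonneg) (simp add: less_eq_complex_def)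
  finally show "0 \<le> qform_on I (\<lambda>i j. \<Sum>l\<in>L. w l i * cnj (w l j)) v" .
qed

lemma psd_on_sum: "(\<And>s. s \<in> S \<Longrightarrow> psd_on I (X s)) \<Longrightarrow> psd_on I (\<lambda>i j. \<Sum>s\<in>S. X s i j)"
  unfolding psd_on_iff_qform_on
proof
  fix v assume "\<And>s. s \<in> S \<Longrightarrow> \<forall>v. 0 \<le> qform_on I (X s) v"
  then have "0 \<le> (\<Sum>s\<in>S. qform_on I (X s) v)" by (intro sum_nonneg) auto
  also have "\<dots> = qform_on I (\<lambda>i j. \<Sum>s\<in>S. X s i j) v"
    unfolding qform_on_def by (simp add: sum_distrib_left sum_distrib_right sum.swap[of _ S])
  finally show "0 \<le> qform_on I (\<lambda>i j. \<Sum>s\<in>S. X s i j) v" .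
qed

lemma psd_on_scale: "0 \<le> c \<Longrightarrow> psd_on I X \<Longrightarrow> psd_on I (\<lambda>i j. complex_of_real c * X i j)"
proof -
  have "qform_on I (\<lambda>i j. complex_of_real c * X i j) v = of_real c * qform_on I X v" for v
    unfolding qform_on_def by (simp add: sum_distrib_left mult_ac)
  moreover assume "0 \<le> c" "psd_on I X"
  ultimately show ?thesis
    unfolding psd_on_iff_qform_on by (auto intro: mult_nonneg_nonneg simp: less_eq_complex_def)
qed

lemma psd_on_transpose: "psd_on I X \<Longrightarrow> psd_on I (\<lambda>i j. X j i)"
proof -
  have "qform_on I (\<lambda>i j. X j i) v = qform_on I X (\<lambda>i. cnj (v i))" for v
    unfolding qform_on_def by (subst sum.swap) (simp add: mult_ac)
  then show "psd_on I X \<Longrightarrow> psd_on I (\<lambda>i j. X j i)"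
    unfolding psd_on_iff_qform_on by simp
qed

lemma psd_on_zero: "(\<And>i j. i \<in> I \<Longrightarrow> j \<in> I \<Longrightarrow> X i j = 0) \<Longrightarrow> psd_on I X"
  by (rule psd_on_eqI[of I "\<lambda>_ _. 0"]) (simp_all add: psd_on_def)

lemma psd_on_tensor:
  fixes X :: "'i \<Rightarrow> 'i \<Rightarrow> complex" and Y :: "'j \<Rightarrow> 'j \<Rightarrow> complex"
  assumes "finite I" "finite J" "psd_on I X" "psd_on J Y"
  shows "psd_on (I \<times> J) (\<lambda>(i, j) (i', j'). X i i' * Y j j')"
proof -
  obtain u and m :: nat where u: "\<And>i i'. i \<in> I \<Longrightarrow> i' \<in> I \<Longrightarrow> X i i' = (\<Sum>l<m. u l i * cnj (u l i'))"
    using psd_on_gram_decomposition[OF assms(1,3)] by metis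
  obtain w and n :: nat where w: "\<And>j j'. j \<in> J \<Longrightarrow> j' \<in> J \<Longrightarrow> Y j j' = (\<Sum>l<n. w l j * cnj (w l j'))"
    using psd_on_gram_decomposition[OF assms(2,4)] by metis
  define g where "g = (\<lambda>(l, l') (i, j). u l i * w l' j)"
  have "psd_on (I \<times> J) (\<lambda>p q. \<Sum>L\<in>{..<m} \<times> {..<n}. g L p * cnj (g L q))"
    by (rule psd_on_gram) simp
  then show ?thesis
  proof (rule psd_on_eqI, clarify)
    fix i j i' j' assume "i \<in> I" "j \<in> J" "i' \<in> I" "j' \<in> J"
    then have "X i i' * Y j j' = (\<Sum>l<m. u l i * cnj (u l i')) * (\<Sum>l'<n. w l' j * cnj (w l' j'))"
      using u w by simp
    also have "\<dots> = (\<Sum>L\<in>{..<m} \<times> {..<n}. g L (i, j) * cnj (g L (i', j')))"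
      unfolding sum_product sum.cartesian_product g_def by (simp add: case_prod_beta mult_ac)
    finally show "(\<Sum>L\<in>{..<m} \<times> {..<n}. g L (i, j) * cnj (g L (i', j'))) = X i i' * Y j j'" ..
  qed
qed

section \<open>Tensor products over lists of subsystems\<close>

lemma idxB_eq_lists: "idxB d n = {bs. set bs \<subseteq> {..<d} \<and> length bs = n}"
  unfolding idxB_def by auto

lemma bitstrings_eq_lists: "bitstrings n = {ys. set ys \<subseteq> {0, 1} \<and> length ys = n}"
  unfolding bitstrings_def by auto

lemma finite_idxB: "finite (idxB d n)"
  unfolding idxB_eq_lists by (simp add: finite_lists_length_eq)

lemma card_idxB: "card (idxB d n) = d ^ n"
  unfolding idxB_eq_lists by (simp add: card_lists_length_eq)

lemma idxB_Suc: "bs \<in> idxB d (Suc n) \<longleftrightarrow> bs \<noteq> [] \<and> hd bs < d \<and> tl bs \<in> idxB d n"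
  unfolding idxB_def by (cases bs) auto

lemma sum_lists_length_Suc:
  "(\<Sum>xs\<in>{xs. set xs \<subseteq> S \<and> length xs = Suc n}. f xs)
    = (\<Sum>s\<in>S. \<Sum>xs\<in>{xs. set xs \<subseteq> S \<and> length xs = n}. f (s # xs))"
proof -
  have "(\<Sum>xs\<in>{xs. set xs \<subseteq> S \<and> length xs = Suc n}. f xs)
      = (\<Sum>(xs, s)\<in>{xs. set xs \<subseteq> S \<and> length xs = n} \<times> S. f (s # xs))"
    unfolding lists_length_Suc_eq
    by (subst sum.reindex) (auto simp: inj_on_def case_prod_beta)
  also have "\<dots> = (\<Sum>s\<in>S. \<Sum>xs\<in>{xs. set xs \<subseteq> S \<and> length xs = n}. f (s # xs))"
    unfolding sum.cartesian_product[symmetric] by (rule sum.swap)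
  finally show ?thesis .
qed

lemma sum_lists_length_prod:
  fixes f :: "nat \<Rightarrow> 'a \<Rightarrow> 'b::comm_semiring_1"
  shows "(\<Sum>ys\<in>{ys. set ys \<subseteq> S \<and> length ys = n}. \<Prod>t<n. f t (ys ! t)) = (\<Prod>t<n. \<Sum>s\<in>S. f t s)"
proof (induction n arbitrary: f)
  case 0
  have "{ys. set ys \<subseteq> S \<and> length ys = 0} = {[]}" by auto
  then show ?case by simp
next
  case (Suc n)
  have "(\<Sum>ys\<in>{ys. set ys \<subseteq> S \<and> length ys = Suc n}. \<Prod>t<Suc n. f t (ys ! t))
      = (\<Sum>s\<in>S. f 0 s * (\<Sum>ys\<in>{ys. set ys \<subseteq> S \<and> length ys = n}. \<Prod>t<n. f (Suc t) (ys ! t)))"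
    unfolding sum_lists_length_Suc
    by (simp add: sum_distrib_left prod.lessThan_Suc_shift del: prod.lessThan_Suc)
  also have "\<dots> = (\<Prod>t<Suc n. \<Sum>s\<in>S. f t s)"
    by (simp add: Suc.IH[of "\<lambda>t. f (Suc t)"] sum_distrib_right prod.lessThan_Suc_shift
        del: prod.lessThan_Suc)
  finally show ?case .
qed

lemma prod_delta_nth:
  assumes "length bs = n" "length bs' = n"
  shows "(\<Prod>t<n. delta (bs ! t) (bs' ! t)) = delta bs bs'"
proof (cases "bs = bs'")
  case False
  then obtain t where "t < n" "bs ! t \<noteq> bs' ! t" using assms nth_equalityI by metis
  then show ?thesis using False by (auto simp: delta_def intro!: prod_zero)
qed (simp add: delta_def)

lemma delta_Cons_split:
  "bs \<noteq> [] \<Longrightarrow> bs' \<noteq> [] \<Longrightarrow> delta (hd bs) (hd bs') * delta (tl bs) (tl bs') = delta bs bs'"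
  by (cases bs; cases bs') (auto simp: delta_def)

lemma psd_on_list_tensor:
  assumes "\<And>t. t < n \<Longrightarrow> psd_on {..<d} (F t)"
  shows "psd_on (idxB d n) (\<lambda>bs bs'. \<Prod>t<n. F t (bs ! t) (bs' ! t))"
  using assms
proof (induction n arbitrary: F)
  case 0
  have "psd_on (idxB d 0) (\<lambda>bs bs'. \<Sum>l\<in>{()}. (\<lambda>_ _. 1) l bs * cnj ((\<lambda>_ _. 1) l bs'))"
    by (rule psd_on_gram) simp
  then show ?case by (rule psd_on_eqI) simp
next
  case (Suc n)
  have "psd_on ({..<d} \<times> idxB d n)
      (\<lambda>(b, bs) (b', bs'). F 0 b b' * (\<Prod>t<n. F (Suc t) (bs ! t) (bs' ! t)))"
    using Suc.IH[of "\<lambda>t. F (Suc t)"] Suc.prems by (intro psd_on_tensor) (auto simp: finite_idxB)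
  then have "psd_on (idxB d (Suc n)) (\<lambda>bs bs'.
      (\<lambda>(b, bs) (b', bs'). F 0 b b' * (\<Prod>t<n. F (Suc t) (bs ! t) (bs' ! t))) (hd bs, tl bs) (hd bs', tl bs'))"
    by (rule psd_on_reindex[rotated 3])
      (auto simp: finite_idxB inj_on_def idxB_Suc, metis hd_Cons_tl)
  then show ?case
    by (rule psd_on_eqI) (auto simp: idxB_Suc neq_Nil_conv prod.lessThan_Suc_shift
        simp del: prod.lessThan_Suc)
qed

section \<open>Traces of products\<close>

lemma trace_mmult_on_eq: "trace_on I (mmult_on I A B) = (\<Sum>i\<in>I. \<Sum>j\<in>I. A i j * B j i)"
  by (simp add: trace_on_def mmult_on_def)

lemma trace_mmult_on_cong:
  "(\<And>i j. i \<in> I \<Longrightarrow> j \<in> I \<Longrightarrow> A i j = A' i j) \<Longrightarrow> trace_on I (mmult_on I A B) = trace_on I (mmult_on I A' B)"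
  unfolding trace_mmult_on_eq by (intro sum.cong refl) simp

lemma trace_mmult_on_sum_left:
  "trace_on I (mmult_on I (\<lambda>i j. \<Sum>s\<in>S. A s i j) B) = (\<Sum>s\<in>S. trace_on I (mmult_on I (A s) B))"
  unfolding trace_mmult_on_eq by (simp add: sum_distrib_right sum.swap[of _ S])

lemma trace_mmult_on_divide_left:
  "trace_on I (mmult_on I (\<lambda>i j. A i j / c) B) = trace_on I (mmult_on I A B) / c"
  unfolding trace_mmult_on_eq by (simp add: sum_divide_distrib)

lemma trace_mmult_on_delta:
  assumes "finite I"
  shows "trace_on I (mmult_on I delta K) = trace_on I K"
proof -
  have "(\<Sum>j\<in>I. delta i j * K j i) = K i i" if "i \<in> I" for i
  proof -
    have "(\<Sum>j\<in>I. delta i j * K j i) = (\<Sum>j\<in>I. if i = j then K j i else 0)"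
      by (rule sum.cong) (simp_all add: delta_def)
    then show ?thesis using assms that by simp
  qed
  then show ?thesis unfolding trace_mmult_on_eq by (simp add: trace_on_def)
qed

lemma Im_trace_mmult_on_hermitian:
  assumes "\<And>i j. i \<in> I \<Longrightarrow> j \<in> I \<Longrightarrow> A j i = cnj (A i j)"
    and "\<And>i j. i \<in> I \<Longrightarrow> j \<in> I \<Longrightarrow> B j i = cnj (B i j)"
  shows "Im (trace_on I (mmult_on I A B)) = 0"
proof -
  have "cnj (trace_on I (mmult_on I A B)) = (\<Sum>i\<in>I. \<Sum>j\<in>I. A j i * B i j)"
    (is "cnj ?z = _")
    unfolding trace_mmult_on_eq cnj_sum
  proof (intro sum.cong refl)
    fix i j assume "i \<in> I" "j \<in> I"
    then have "A j i = cnj (A i j)" "B i j = cnj (B j i)" using assms by blast+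
    then show "cnj (A i j * B j i) = A j i * B i j" by simp
  qed
  also have "\<dots> = trace_on I (mmult_on I A B)"
    unfolding trace_mmult_on_eq by (subst sum.swap) simp
  finally have "Im (cnj ?z) = Im ?z" by (rule arg_cong)
  then show ?thesis by simp
qed

lemma trace_mmult_on_reindex:
  assumes "bij_betw f J I"
  shows "trace_on J (mmult_on J (\<lambda>p q. A (f p) (f q)) (\<lambda>p q. B (f p) (f q))) = trace_on I (mmult_on I A B)"
proof -
  have "(\<Sum>q\<in>J. A (f p) (f q) * B (f q) (f p)) = (\<Sum>j\<in>I. A (f p) j * B j (f p))" for p
    by (rule sum.reindex_bij_betw[OF assms])
  then have "trace_on J (mmult_on J (\<lambda>p q. A (f p) (f q)) (\<lambda>p q. B (f p) (f q)))
      = (\<Sum>p\<in>J. \<Sum>j\<in>I. A (f p) j * B j (f p))"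
    by (simp add: trace_mmult_on_eq)
  also have "\<dots> = trace_on I (mmult_on I A B)"
    unfolding trace_mmult_on_eq by (rule sum.reindex_bij_betw[OF assms])
  finally show ?thesis .
qed

lemma trace_mmult_on_tensor_delta:
  assumes "finite R"
  shows "trace_on (I \<times> R) (mmult_on (I \<times> R) (\<lambda>(i, r) (i', r'). A i i' * delta r r')
      (\<lambda>(i, r) (i', r'). B i i' * delta r r'))
    = of_nat (card R) * trace_on I (mmult_on I A B)"
proof -
  have delta_sq: "(\<Sum>r'\<in>R. delta r r' * delta r' r) = 1" if "r \<in> R" for r
    using assms that by (simp add: delta_def if_distrib[of "\<lambda>z. z * _"] eq_commute[of r] cong: if_cong)
  have "trace_on (I \<times> R) (mmult_on (I \<times> R) (\<lambda>(i, r) (i', r'). A i i' * delta r r')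
      (\<lambda>(i, r) (i', r'). B i i' * delta r r'))
      = (\<Sum>i\<in>I. \<Sum>r\<in>R. \<Sum>i'\<in>I. \<Sum>r'\<in>R. (A i i' * B i' i) * (delta r r' * delta r' r))"
    unfolding trace_mmult_on_eq sum.cartesian_product' by (simp add: mult_ac)
  also have "\<dots> = (\<Sum>i\<in>I. \<Sum>r\<in>R. \<Sum>i'\<in>I. A i i' * B i' i)"
    using delta_sq by (simp flip: sum_distrib_left)
  also have "\<dots> = of_nat (card R) * trace_on I (mmult_on I A B)"
    by (simp add: trace_mmult_on_eq sum_distrib_left)
  finally show ?thesis .
qed

text \<open>\<open>extend_first X\<close> is \<open>X \<otimes> I\<close>, with \<open>X\<close> on \<open>A B\<^sub>1\<close> and \<open>I\<close> on
  \<open>B\<^sub>2 \<dots> B\<^sub>k\<close>.\<close>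

definition extend_first :: "(nat \<times> nat \<Rightarrow> nat \<times> nat \<Rightarrow> complex) \<Rightarrow> opAB" where
  "extend_first X = (\<lambda>(a, bs) (a', bs'). X (a, hd bs) (a', hd bs') * delta (tl bs) (tl bs'))"

lemma trace_mmult_extend_first:
  "trace_on (idxAB dA d (Suc n)) (mmult_on (idxAB dA d (Suc n)) (extend_first X) (extend_first Y))
    = of_nat (d ^ n) * trace_on ({..<dA} \<times> {..<d}) (mmult_on ({..<dA} \<times> {..<d}) X Y)"
proof -
  define f :: "nat \<times> nat list \<Rightarrow> (nat \<times> nat) \<times> nat list"
    where "f = (\<lambda>(a, bs). ((a, hd bs), tl bs))"
  have "bij_betw f (idxAB dA d (Suc n)) (({..<dA} \<times> {..<d}) \<times> idxB d n)"
    by (rule bij_betw_byWitness[where f' = "\<lambda>((a, b), bs). (a, b # bs)"])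
      (auto simp: f_def idxAB_def idxB_Suc)
  moreover have "extend_first Z = (\<lambda>p q. (\<lambda>(i, r) (i', r'). Z i i' * delta r r') (f p) (f q))" for Z
    by (simp add: fun_eq_iff f_def extend_first_def)
  ultimately show ?thesis
    by (simp add: trace_mmult_on_reindex trace_mmult_on_tensor_delta finite_idxB card_idxB)
qed

section \<open>Channels and decoding probabilities\<close>

lemma psd_on_apply_chan:
  assumes "completely_positive dA dB N" "psd_on {..<dA} R"
  shows "psd_on {..<dB} (apply_chan dA N R)"
proof -
  \<comment> \<open>complete positivity with a one-dimensional ancilla\<close>
  have "psd_on ({..<Suc 0} \<times> {..<dA}) (\<lambda>p q. R (snd p) (snd q))"
    by (rule psd_on_reindex[OF _ _ _ assms(2)]) (auto simp: inj_on_def)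
  then have "psd_on ({..<Suc 0} \<times> {..<dB}) (\<lambda>(r, b) (r', b').
      \<Sum>i<dA. \<Sum>j<dA. (\<lambda>p q. R (snd p) (snd q)) (r, i) (r', j) * N i j b b')"
    using assms(1) unfolding completely_positive_def by blast
  then have out: "psd_on ({..<Suc 0} \<times> {..<dB})
      (\<lambda>(r, b) (r', b'). \<Sum>i<dA. \<Sum>j<dA. R i j * N i j b b')"
    by simp
  from psd_on_reindex[OF _ _ _ out, of "\<lambda>b. (0, b)" "{..<dB}"] show ?thesis
    by (simp add: inj_on_def image_subset_iff apply_chan_def)
qed

lemma trace_apply_chan:
  assumes "trace_preserving dA dB N"
  shows "trace_on {..<dB} (apply_chan dA N R) = trace_on {..<dA} R"
proof -
  have "trace_on {..<dB} (apply_chan dA N R) = (\<Sum>i<dA. \<Sum>j<dA. R i j * trace_on {..<dB} (N i j))"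
    unfolding apply_chan_def trace_on_def
    by (simp add: sum_distrib_left sum.swap[of _ "{..<dB}"])
  also have "\<dots> = (\<Sum>i<dA. \<Sum>j<dA. R i j * delta i j)"
    using assms unfolding trace_preserving_def by simp
  also have "\<dots> = trace_on {..<dA} R"
    unfolding trace_on_def delta_def by (simp add: if_distrib cong: if_cong)
  finally show ?thesis .
qed

lemma trace_transpose_tensor_choi:
  "trace_on ({..<dA} \<times> {..<dB}) (mmult_on ({..<dA} \<times> {..<dB}) (\<lambda>(a, b) (a', b'). R a' a * L b b') (choi N))
    = trace_on {..<dB} (mmult_on {..<dB} L (apply_chan dA N R))"
proof -
  have "trace_on ({..<dA} \<times> {..<dB}) (mmult_on ({..<dA} \<times> {..<dB}) (\<lambda>(a, b) (a', b'). R a' a * L b b') (choi N))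
      = (\<Sum>a<dA. \<Sum>b<dB. \<Sum>a'<dA. \<Sum>b'<dB. L b b' * (R a' a * N a' a b' b))"
    unfolding trace_mmult_on_eq sum.cartesian_product' choi_def by (simp add: mult_ac)
  also have "\<dots> = (\<Sum>b<dB. \<Sum>a<dA. \<Sum>b'<dB. \<Sum>a'<dA. L b b' * (R a' a * N a' a b' b))"
    by (subst sum.swap) (rule sum.cong[OF refl], rule sum.cong[OF refl], rule sum.swap)
  also have "\<dots> = (\<Sum>b<dB. \<Sum>b'<dB. \<Sum>a'<dA. \<Sum>a<dA. L b b' * (R a' a * N a' a b' b))"
    by (rule sum.cong[OF refl], subst sum.swap) (rule sum.cong[OF refl], rule sum.swap)
  also have "\<dots> = trace_on {..<dB} (mmult_on {..<dB} L (apply_chan dA N R))"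
    unfolding trace_mmult_on_eq apply_chan_def by (simp add: sum_distrib_left)
  finally show ?thesis .
qed

lemma choi_ext_eq_extend_first: "choi_ext N = extend_first (choi N)"
  by (simp add: fun_eq_iff choi_ext_def extend_first_def)

definition decoding_prob :: "nat \<Rightarrow> nat \<Rightarrow> chan \<Rightarrow> (nat \<Rightarrow> nat \<Rightarrow> nat \<Rightarrow> complex)
    \<Rightarrow> (nat \<Rightarrow> nat \<Rightarrow> nat \<Rightarrow> complex) \<Rightarrow> nat \<Rightarrow> nat \<Rightarrow> complex" where
  "decoding_prob dA dB N \<rho> Lam xh x = trace_on {..<dB} (mmult_on {..<dB} (Lam xh) (apply_chan dA N (\<rho> x)))"

lemma sum_decoding_prob:
  assumes "trace_preserving dA dB N" "povm_on {..<dB} M Lam" "trace_on {..<dA} (\<rho> x) = 1"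
  shows "(\<Sum>xh<M. decoding_prob dA dB N \<rho> Lam xh x) = 1"
proof -
  have "(\<Sum>xh<M. decoding_prob dA dB N \<rho> Lam xh x)
      = trace_on {..<dB} (mmult_on {..<dB} (\<lambda>i j. \<Sum>xh<M. Lam xh i j) (apply_chan dA N (\<rho> x)))"
    unfolding decoding_prob_def trace_mmult_on_sum_left ..
  also have "\<dots> = trace_on {..<dB} (mmult_on {..<dB} delta (apply_chan dA N (\<rho> x)))"
    using assms(2) unfolding povm_on_def by (intro trace_mmult_on_cong) simp
  finally show ?thesis
    using assms by (simp add: trace_mmult_on_delta trace_apply_chan)
qed

lemma decoding_prob_correct_ge:
  assumes "quantum_channel dA dB N" "\<forall>x<M. is_state_on {..<dA} (\<rho> x)" "povm_on {..<dB} M Lam"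
    and "max_err_prob dA dB N M \<rho> Lam \<le> \<epsilon>" "x < M"
  shows "complex_of_real (1 - \<epsilon>) \<le> decoding_prob dA dB N \<rho> Lam x x"
proof -
  have psd_out: "psd_on {..<dB} (apply_chan dA N (\<rho> x))"
    using assms(1,2,5) psd_on_apply_chan unfolding quantum_channel_def is_state_on_def by blast
  have psd_Lam: "psd_on {..<dB} (Lam x)" using assms(3,5) unfolding povm_on_def by blast
  have real: "Im (decoding_prob dA dB N \<rho> Lam x x) = 0"
    unfolding decoding_prob_def
    by (rule Im_trace_mmult_on_hermitian) (auto intro: psd_on_hermitian[OF _ psd_Lam]
        psd_on_hermitian[OF _ psd_out])
  have "Re (\<Sum>xh\<in>{..<M} - {x}. decoding_prob dA dB N \<rho> Lam xh x) \<le> max_err_prob dA dB N M \<rho> Lam"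
    unfolding max_err_prob_def decoding_prob_def using assms(5) by (intro Max_ge) auto
  moreover have "Re (decoding_prob dA dB N \<rho> Lam x x)
      + Re (\<Sum>xh\<in>{..<M} - {x}. decoding_prob dA dB N \<rho> Lam xh x) = 1"
  proof -
    have "(\<Sum>xh<M. decoding_prob dA dB N \<rho> Lam xh x) = 1"
      by (rule sum_decoding_prob) (use assms in \<open>auto simp: quantum_channel_def is_state_on_def\<close>)
    then have "decoding_prob dA dB N \<rho> Lam x x
        + (\<Sum>xh\<in>{..<M} - {x}. decoding_prob dA dB N \<rho> Lam xh x) = 1"
      using sum.remove[of "{..<M}" x "\<lambda>xh. decoding_prob dA dB N \<rho> Lam xh x"] assms(5) by simp
    from arg_cong[where f = Re, OF this] show ?thesis by simp
  qed
  ultimately have "1 - \<epsilon> \<le> Re (decoding_prob dA dB N \<rho> Lam x x)"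
    using assms(4) by linarith
  then show ?thesis using real by (simp add: less_eq_complex_def)
qed

lemma avg_decoding_prob_ge:
  assumes "quantum_channel dA dB N" "\<forall>x<M. is_state_on {..<dA} (\<rho> x)" "povm_on {..<dB} M Lam"
    and "max_err_prob dA dB N M \<rho> Lam \<le> \<epsilon>" "1 \<le> M"
  shows "complex_of_real (1 - \<epsilon>) \<le> (\<Sum>x<M. decoding_prob dA dB N \<rho> Lam x x) / of_nat M"
proof -
  have each: "1 - \<epsilon> \<le> Re (decoding_prob dA dB N \<rho> Lam x x)"
    "Im (decoding_prob dA dB N \<rho> Lam x x) = 0" if "x < M" for x
    using decoding_prob_correct_ge[OF assms(1-4) that] by (auto simp: less_eq_complex_def)
  have "real M * (1 - \<epsilon>) \<le> (\<Sum>x<M. Re (decoding_prob dA dB N \<rho> Lam x x))"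
    using sum_mono[of "{..<M}" "\<lambda>_. 1 - \<epsilon>"] each(1) by simp
  then show ?thesis
    using assms(5) each(2)
    by (simp add: less_eq_complex_def Re_sum Im_sum Re_divide_of_nat Im_divide_of_nat field_simps)
qed

section \<open>The operators built from a code\<close>

definition binary_test :: "(nat \<Rightarrow> nat \<Rightarrow> nat \<Rightarrow> complex) \<Rightarrow> nat \<Rightarrow> nat \<Rightarrow> nat \<Rightarrow> nat \<Rightarrow> complex" where
  "binary_test Lam x b = (if b = 0 then Lam x else (\<lambda>i j. delta i j - Lam x i j))"

definition test_string_op ::
    "nat \<Rightarrow> (nat \<Rightarrow> nat \<Rightarrow> nat \<Rightarrow> complex) \<Rightarrow> nat \<Rightarrow> nat list \<Rightarrow> nat list \<Rightarrow> nat list \<Rightarrow> complex" where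
  "test_string_op k Lam x y bs bs' = (\<Prod>t<k. binary_test Lam x (y ! t) (bs ! t) (bs' ! t))"

text \<open>The entries \<open>\<rho> x a' a\<close> make the encoding states enter transposed.\<close>

definition code_op :: "nat \<Rightarrow> nat \<Rightarrow> (nat \<Rightarrow> nat \<Rightarrow> nat \<Rightarrow> complex) \<Rightarrow> (nat \<Rightarrow> nat \<Rightarrow> nat \<Rightarrow> complex)
    \<Rightarrow> nat list \<Rightarrow> opAB" where
  "code_op k M \<rho> Lam y =
     (\<lambda>(a, bs) (a', bs'). (\<Sum>x<M. \<rho> x a' a * test_string_op k Lam x y bs bs') / of_nat M)"

definition code_input_state :: "nat \<Rightarrow> (nat \<Rightarrow> nat \<Rightarrow> nat \<Rightarrow> complex) \<Rightarrow> nat \<Rightarrow> nat \<Rightarrow> complex" where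
  "code_input_state M \<rho> = (\<lambda>a a'. (\<Sum>x<M. \<rho> x a' a) / of_nat M)"

lemma sum_binary_test: "(\<Sum>b\<in>{0::nat, 1}. binary_test Lam x b i j) = delta i j"
  by (simp add: binary_test_def)

lemma psd_on_binary_test:
  assumes "povm_on I M Lam" "x < M"
  shows "psd_on I (binary_test Lam x b)"
proof (cases "b = 0")
  case True
  then show ?thesis using assms unfolding povm_on_def binary_test_def by simp
next
  case False
  have "psd_on I (\<lambda>i j. \<Sum>x'\<in>{..<M} - {x}. Lam x' i j)"
    by (rule psd_on_sum) (use assms in \<open>auto simp: povm_on_def\<close>)
  then show ?thesis
  proof (rule psd_on_eqI)
    fix i j assume "i \<in> I" "j \<in> I"
    then have "Lam x i j + (\<Sum>x'\<in>{..<M} - {x}. Lam x' i j) = delta i j"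
      using assms sum.remove[of "{..<M}" x "\<lambda>x'. Lam x' i j"] unfolding povm_on_def by simp
    then show "(\<Sum>x'\<in>{..<M} - {x}. Lam x' i j) = binary_test Lam x b i j"
      using False unfolding binary_test_def by (simp add: algebra_simps)
  qed
qed

lemma sum_test_string_op:
  assumes "length bs = n" "length bs' = n"
  shows "(\<Sum>y\<in>bitstrings n. test_string_op n Lam x y bs bs') = delta bs bs'"
proof -
  have "(\<Sum>y\<in>bitstrings n. test_string_op n Lam x y bs bs')
      = (\<Prod>t<n. \<Sum>b\<in>{0, 1}. binary_test Lam x b (bs ! t) (bs' ! t))"
    unfolding test_string_op_def bitstrings_eq_lists by (rule sum_lists_length_prod)
  then show ?thesis by (simp only: sum_binary_test prod_delta_nth[OF assms])
qed

lemma test_string_op_Cons: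
  assumes "bs \<noteq> []" "bs' \<noteq> []"
  shows "test_string_op (Suc n) Lam x (b # y) bs bs'
    = binary_test Lam x b (hd bs) (hd bs') * test_string_op n Lam x y (tl bs) (tl bs')"
  using assms unfolding test_string_op_def
  by (auto simp: neq_Nil_conv prod.lessThan_Suc_shift simp del: prod.lessThan_Suc)

lemma test_string_op_snoc:
  "length y = n \<Longrightarrow> test_string_op (Suc n) Lam x (y @ [b]) bs bs'
    = test_string_op n Lam x y bs bs' * binary_test Lam x b (bs ! n) (bs' ! n)"
  unfolding test_string_op_def by (simp add: nth_append)

lemma test_string_op_butlast:
  "length bs = Suc n \<Longrightarrow> length bs' = Suc n
    \<Longrightarrow> test_string_op n Lam x y (butlast bs @ [c]) (butlast bs' @ [c']) = test_string_op n Lam x y bs bs'"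
  unfolding test_string_op_def by (intro prod.cong refl) (simp add: nth_append nth_butlast)

lemma test_string_op_permute:
  assumes "\<pi> permutes {..<k}" "length y = k" "length bs = k" "length bs' = k"
  shows "test_string_op k Lam x (permute_list_by \<pi> y) (permute_list_by \<pi> bs) (permute_list_by \<pi> bs')
    = test_string_op k Lam x y bs bs'"
proof -
  have "test_string_op k Lam x (permute_list_by \<pi> y) (permute_list_by \<pi> bs) (permute_list_by \<pi> bs')
      = (\<Prod>t<k. (\<lambda>s. binary_test Lam x (y ! s) (bs ! s) (bs' ! s)) (\<pi> t))"
    unfolding test_string_op_def permute_list_by_def using assms(2-4) by simp
  also have "\<dots> = test_string_op k Lam x y bs bs'"
    unfolding test_string_op_def
    using prod.permute[OF assms(1), of "\<lambda>s. binary_test Lam x (y ! s) (bs ! s) (bs' ! s)"]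
    by (simp add: comp_def)
  finally show ?thesis .
qed

lemma psd_on_code_mixture:
  assumes "\<And>x. x < M \<Longrightarrow> psd_on {..<dA} (\<rho> x)"
    and "\<And>x t. x < M \<Longrightarrow> t < k \<Longrightarrow> psd_on {..<dB} (G x t)"
  shows "psd_on (idxAB dA dB k)
    (\<lambda>(a, bs) (a', bs'). (\<Sum>x<M. \<rho> x a' a * (\<Prod>t<k. G x t (bs ! t) (bs' ! t))) / of_nat M)"
proof -
  have "psd_on (idxAB dA dB k) (\<lambda>p q. \<Sum>x<M. complex_of_real (1 / real M) *
      (\<lambda>(a, bs) (a', bs'). \<rho> x a' a * (\<Prod>t<k. G x t (bs ! t) (bs' ! t))) p q)"
  proof (intro psd_on_sum psd_on_scale)
    fix x assume "x \<in> {..<M}"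
    then show "psd_on (idxAB dA dB k)
        (\<lambda>(a, bs) (a', bs'). \<rho> x a' a * (\<Prod>t<k. G x t (bs ! t) (bs' ! t)))"
      unfolding idxAB_def using assms
      by (intro psd_on_tensor psd_on_list_tensor psd_on_transpose[of _ "\<rho> x"])
        (auto simp: finite_idxB)
  qed simp
  then show ?thesis
    by (rule psd_on_eqI) (simp add: case_prod_beta sum_divide_distrib)
qed

lemma code_input_state_is_state:
  assumes "\<forall>x<M. is_state_on {..<dA} (\<rho> x)" "1 \<le> M"
  shows "is_state_on {..<dA} (code_input_state M \<rho>)"
  unfolding is_state_on_def
proof
  have "psd_on {..<dA} (\<lambda>i j. \<Sum>x<M. complex_of_real (1 / real M) * \<rho> x j i)"
    using assms(1) unfolding is_state_on_def
    by (intro psd_on_sum psd_on_scale psd_on_transpose[of _ "\<rho> x" for x]) auto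
  then show "psd_on {..<dA} (code_input_state M \<rho>)"
    by (rule psd_on_eqI) (simp add: code_input_state_def sum_divide_distrib)
  have "trace_on {..<dA} (code_input_state M \<rho>) = (\<Sum>x<M. trace_on {..<dA} (\<rho> x)) / of_nat M"
    unfolding trace_on_def code_input_state_def sum_divide_distrib[symmetric] by (subst sum.swap) (rule refl)
  also have "\<dots> = 1" using assms unfolding is_state_on_def by simp
  finally show "trace_on {..<dA} (code_input_state M \<rho>) = 1" .
qed

lemma sum_code_op:
  assumes "bs \<in> idxB dB k" "bs' \<in> idxB dB k"
  shows "(\<Sum>y\<in>bitstrings k. code_op k M \<rho> Lam y (a, bs) (a', bs')) = code_input_state M \<rho> a a' * delta bs bs'"
proof -
  have "(\<Sum>y\<in>bitstrings k. code_op k M \<rho> Lam y (a, bs) (a', bs'))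
      = (\<Sum>x<M. \<rho> x a' a * (\<Sum>y\<in>bitstrings k. test_string_op k Lam x y bs bs')) / of_nat M"
    unfolding code_op_def
    by (simp add: sum_distrib_left sum.swap[of _ "bitstrings k"] flip: sum_divide_distrib)
  then show ?thesis
    using assms unfolding idxB_def code_input_state_def
    by (simp add: sum_test_string_op sum_distrib_right)
qed

lemma psd_on_code_op:
  assumes "\<forall>x<M. is_state_on {..<dA} (\<rho> x)" "povm_on {..<dB} M Lam"
  shows "psd_on (idxAB dA dB k) (code_op k M \<rho> Lam y)"
  unfolding code_op_def test_string_op_def
  by (rule psd_on_code_mixture)
    (use assms(1) psd_on_binary_test[OF assms(2)] in \<open>auto simp: is_state_on_def\<close>)

lemma conj_perm_code_op:
  assumes "\<pi> permutes {..<k}" "y \<in> bitstrings k" "p \<in> idxAB dA dB k" "p' \<in> idxAB dA dB k"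
  shows "conj_perm \<pi> (code_op k M \<rho> Lam (permute_list_by \<pi> y)) p p' = code_op k M \<rho> Lam y p p'"
  using assms test_string_op_permute[OF assms(1)]
  by (auto simp: conj_perm_def code_op_def bitstrings_def idxAB_def idxB_def)

lemma psd_on_ptrans_code_op:
  assumes "\<forall>x<M. is_state_on {..<dA} (\<rho> x)" "povm_on {..<dB} M Lam" "i \<le> k"
  shows "psd_on (idxAB dA dB k) (ptrans i (code_op k M \<rho> Lam y))"
proof -
  \<comment> \<open>the partial transpose on \<open>B\<^sub>1\<dots>B\<^sub>i\<close> transposes the first \<open>i\<close> tensor factors\<close>
  define G where "G x t = (if t < i then (\<lambda>u v. binary_test Lam x (y ! t) v u)
    else binary_test Lam x (y ! t))" for x t
  have "psd_on (idxAB dA dB k)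
      (\<lambda>(a, bs) (a', bs'). (\<Sum>x<M. \<rho> x a' a * (\<Prod>t<k. G x t (bs ! t) (bs' ! t))) / of_nat M)"
  proof (rule psd_on_code_mixture)
    fix x t assume "x < M"
    then show "psd_on {..<dB} (G x t)"
      unfolding G_def using psd_on_binary_test[OF assms(2)]
        psd_on_transpose[OF psd_on_binary_test[OF assms(2)]] by simp
  qed (use assms(1) in \<open>auto simp: is_state_on_def\<close>)
  then show ?thesis
  proof (rule psd_on_eqI, clarify)
    fix a bs a' bs' assume "(a, bs) \<in> idxAB dA dB k" "(a', bs') \<in> idxAB dA dB k"
    then have "length bs = k" "length bs' = k" by (auto simp: idxAB_def idxB_def)
    then have "test_string_op k Lam x y (take i bs' @ drop i bs) (take i bs @ drop i bs')
        = (\<Prod>t<k. G x t (bs ! t) (bs' ! t))" for x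
      unfolding test_string_op_def G_def using assms(3)
      by (intro prod.cong refl) (simp add: nth_append min_def)
    then show "(\<Sum>x<M. \<rho> x a' a * (\<Prod>t<k. G x t (bs ! t) (bs' ! t))) / of_nat M
        = ptrans i (code_op k M \<rho> Lam y) (a, bs) (a', bs')"
      unfolding ptrans_def code_op_def by simp
  qed
qed

lemma ptrace_A_code_op:
  assumes "\<forall>x<M. trace_on {..<dA} (\<rho> x) = 1"
  shows "ptrace_A dA (code_op k M \<rho> Lam y) bs bs' = (\<Sum>x<M. test_string_op k Lam x y bs bs') / of_nat M"
proof -
  have "ptrace_A dA (code_op k M \<rho> Lam y) bs bs'
      = (\<Sum>x<M. trace_on {..<dA} (\<rho> x) * test_string_op k Lam x y bs bs') / of_nat M"
    unfolding ptrace_A_def code_op_def trace_on_def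
    by (simp add: sum_distrib_right sum.swap[of _ "{..<dA}"] flip: sum_divide_distrib)
  then show ?thesis using assms by simp
qed

lemma sum_ptrace_A_code_op_first_zero:
  assumes "\<forall>x<M. trace_on {..<dA} (\<rho> x) = 1" "povm_on {..<dB} M Lam"
    and "bs \<in> idxB dB (Suc n)" "bs' \<in> idxB dB (Suc n)"
  shows "(\<Sum>y\<in>bitstrings n. ptrace_A dA (code_op (Suc n) M \<rho> Lam (0 # y)) bs bs') = delta bs bs' / of_nat M"
proof -
  have ne: "bs \<noteq> []" "bs' \<noteq> []" and tl: "length (tl bs) = n" "length (tl bs') = n"
    and hd: "hd bs < dB" "hd bs' < dB"
    using assms(3,4) unfolding idxB_Suc by (auto simp: idxB_def)
  have "(\<Sum>y\<in>bitstrings n. ptrace_A dA (code_op (Suc n) M \<rho> Lam (0 # y)) bs bs')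
      = (\<Sum>x<M. Lam x (hd bs) (hd bs') * (\<Sum>y\<in>bitstrings n. test_string_op n Lam x y (tl bs) (tl bs')))
        / of_nat M"
    by (simp only: ptrace_A_code_op[OF assms(1)] test_string_op_Cons[OF ne])
      (simp add: binary_test_def sum_distrib_left sum.swap[of _ "bitstrings n"] flip: sum_divide_distrib)
  also have "\<dots> = delta (hd bs) (hd bs') * delta (tl bs) (tl bs') / of_nat M"
    using assms(2) hd unfolding povm_on_def
    by (simp add: sum_test_string_op[OF tl] flip: sum_distrib_right)
  finally show ?thesis by (simp add: delta_Cons_split[OF ne])
qed

lemma sum_snoc_ptrace_A_code_op:
  assumes "\<forall>x<M. trace_on {..<dA} (\<rho> x) = 1" "length y = n"
  shows "(\<Sum>b\<in>{0, 1}. ptrace_A dA (code_op (Suc n) M \<rho> Lam (y @ [b])) bs bs')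
    = (\<Sum>x<M. test_string_op n Lam x y bs bs') / of_nat M * delta (bs ! n) (bs' ! n)"
proof -
  have "(\<Sum>b\<in>{0, 1}. ptrace_A dA (code_op (Suc n) M \<rho> Lam (y @ [b])) bs bs')
      = (\<Sum>b\<in>{0::nat, 1}. \<Sum>x<M. test_string_op n Lam x y bs bs' * binary_test Lam x b (bs ! n) (bs' ! n))
        / of_nat M"
    by (simp only: ptrace_A_code_op[OF assms(1)] test_string_op_snoc[OF assms(2)])
      (simp add: add_divide_distrib)
  also have "\<dots> = (\<Sum>x<M. test_string_op n Lam x y bs bs' *
      (\<Sum>b\<in>{0::nat, 1}. binary_test Lam x b (bs ! n) (bs' ! n))) / of_nat M"
    by (subst sum.swap) (simp only: sum_distrib_left)
  also have "\<dots> = (\<Sum>x<M. test_string_op n Lam x y bs bs') / of_nat M * delta (bs ! n) (bs' ! n)"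
    by (simp only: sum_binary_test) (simp add: sum_distrib_right)
  finally show ?thesis .
qed

lemma code_op_last_marginal:
  assumes "\<forall>x<M. trace_on {..<dA} (\<rho> x) = 1" "0 < dB"
    and "y \<in> bitstrings n" "bs \<in> idxB dB (Suc n)" "bs' \<in> idxB dB (Suc n)"
  shows "(\<Sum>b\<in>{0, 1}. ptrace_A dA (code_op (Suc n) M \<rho> Lam (y @ [b])) bs bs')
    = (1 / of_nat dB) * (\<Sum>b\<in>{0, 1}. ptrace_ABk_tensor_I dA dB (code_op (Suc n) M \<rho> Lam (y @ [b])) bs bs')"
proof -
  define S where "S cs cs' = (\<Sum>x<M. test_string_op n Lam x y cs cs') / of_nat M" for cs cs'
  have ly: "length y = n" using assms(3) by (simp add: bitstrings_def)
  have l: "length bs = Suc n" "length bs' = Suc n" using assms(4,5) by (simp_all add: idxB_def)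
  have last: "last bs = bs ! n" "last bs' = bs' ! n"
  proof -
    have "bs \<noteq> []" "bs' \<noteq> []" using l by auto
    then show "last bs = bs ! n" "last bs' = bs' ! n" using l by (simp_all add: last_conv_nth)
  qed
  have "(\<Sum>b\<in>{0, 1}. ptrace_ABk_tensor_I dA dB (code_op (Suc n) M \<rho> Lam (y @ [b])) bs bs')
      = (\<Sum>c<dB. \<Sum>b\<in>{0, 1}.
          ptrace_A dA (code_op (Suc n) M \<rho> Lam (y @ [b])) (butlast bs @ [c]) (butlast bs' @ [c]))
        * delta (last bs) (last bs')"
    unfolding ptrace_ABk_tensor_I_def ptrace_A_def
    by (simp add: sum.distrib distrib_right sum.swap[of _ "{..<dA}"])
  also have "\<dots> = (\<Sum>c<dB. S bs bs') * delta (bs ! n) (bs' ! n)"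
    by (subst sum_snoc_ptrace_A_code_op[OF assms(1) ly])
      (use l in \<open>simp add: S_def test_string_op_butlast nth_append last delta_def\<close>)
  moreover have "(\<Sum>b\<in>{0, 1}. ptrace_A dA (code_op (Suc n) M \<rho> Lam (y @ [b])) bs bs')
      = S bs bs' * delta (bs ! n) (bs' ! n)"
    unfolding S_def by (rule sum_snoc_ptrace_A_code_op[OF assms(1) ly])
  ultimately show ?thesis using assms(2) by simp
qed

definition code_success_op ::
    "nat \<Rightarrow> (nat \<Rightarrow> nat \<Rightarrow> nat \<Rightarrow> complex) \<Rightarrow> (nat \<Rightarrow> nat \<Rightarrow> nat \<Rightarrow> complex) \<Rightarrow> nat \<times> nat \<Rightarrow> nat \<times> nat \<Rightarrow> complex" where
  "code_success_op M \<rho> Lam = (\<lambda>(a, b) (a', b'). (\<Sum>x<M. \<rho> x a' a * Lam x b b') / of_nat M)"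

lemma sum_code_op_first_zero:
  assumes "bs \<in> idxB dB (Suc n)" "bs' \<in> idxB dB (Suc n)"
  shows "(\<Sum>y\<in>bitstrings n. code_op (Suc n) M \<rho> Lam (0 # y) (a, bs) (a', bs'))
    = extend_first (code_success_op M \<rho> Lam) (a, bs) (a', bs')"
proof -
  have ne: "bs \<noteq> []" "bs' \<noteq> []" and tl: "length (tl bs) = n" "length (tl bs') = n"
    using assms unfolding idxB_Suc by (auto simp: idxB_def)
  have "(\<Sum>y\<in>bitstrings n. code_op (Suc n) M \<rho> Lam (0 # y) (a, bs) (a', bs'))
      = (\<Sum>x<M. \<rho> x a' a * (Lam x (hd bs) (hd bs') *
          (\<Sum>y\<in>bitstrings n. test_string_op n Lam x y (tl bs) (tl bs')))) / of_nat M"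
    unfolding code_op_def
    by (simp add: test_string_op_Cons[OF ne] binary_test_def sum_distrib_left
        sum.swap[of _ "bitstrings n"] flip: sum_divide_distrib)
  then show ?thesis
    by (simp add: sum_test_string_op[OF tl] extend_first_def code_success_op_def sum_distrib_right
        mult.assoc)
qed

lemma trace_code_success_op_choi:
  "trace_on ({..<dA} \<times> {..<dB}) (mmult_on ({..<dA} \<times> {..<dB}) (code_success_op M \<rho> Lam) (choi N))
    = (\<Sum>x<M. decoding_prob dA dB N \<rho> Lam x x) / of_nat M"
proof -
  have eq: "code_success_op M \<rho> Lam
      = (\<lambda>p q. (\<Sum>x<M. (\<lambda>(a, b) (a', b'). \<rho> x a' a * Lam x b b') p q) / of_nat M)"
    by (simp add: fun_eq_iff code_success_op_def)
  show ?thesis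
    unfolding eq trace_mmult_on_divide_left trace_mmult_on_sum_left trace_transpose_tensor_choi
      decoding_prob_def by simp
qed

section \<open>The code gives a feasible point\<close>

lemma code_op_success_ge:
  assumes "quantum_channel dA dB N" "\<forall>x<M. is_state_on {..<dA} (\<rho> x)" "povm_on {..<dB} M Lam"
    and "max_err_prob dA dB N M \<rho> Lam \<le> \<epsilon>" "1 \<le> M" "0 < dB"
  shows "complex_of_real (1 - \<epsilon>) \<le> (1 / of_nat dB ^ n) * (\<Sum>y\<in>bitstrings n.
      trace_on (idxAB dA dB (Suc n))
        (mmult_on (idxAB dA dB (Suc n)) (code_op (Suc n) M \<rho> Lam (0 # y)) (choi_ext N)))"
proof -
  let ?I = "idxAB dA dB (Suc n)"
  have "(\<Sum>y\<in>bitstrings n. trace_on ?I (mmult_on ?I (code_op (Suc n) M \<rho> Lam (0 # y)) (choi_ext N)))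
      = trace_on ?I (mmult_on ?I (\<lambda>p q. \<Sum>y\<in>bitstrings n. code_op (Suc n) M \<rho> Lam (0 # y) p q) (choi_ext N))"
    by (rule trace_mmult_on_sum_left[symmetric])
  also have "\<dots> = trace_on ?I (mmult_on ?I (extend_first (code_success_op M \<rho> Lam)) (extend_first (choi N)))"
    unfolding choi_ext_eq_extend_first
    by (rule trace_mmult_on_cong) (auto simp: idxAB_def sum_code_op_first_zero)
  also have "\<dots> = of_nat (dB ^ n) * ((\<Sum>x<M. decoding_prob dA dB N \<rho> Lam x x) / of_nat M)"
    by (simp add: trace_mmult_extend_first trace_code_success_op_choi)
  finally show ?thesis
    using avg_decoding_prob_ge[OF assms(1-5)] assms(6) by simp
qed

lemma feasible_of_achievable:
  assumes "0 < dB" "quantum_channel dA dB N" "1 \<le> k" "achievable dA dB N \<epsilon> M"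
  shows "\<exists>\<rho>\<^sub>A Q. feasible dA dB N \<epsilon> k (1 / real M) \<rho>\<^sub>A Q"
proof -
  obtain \<rho> Lam where st: "\<forall>x<M. is_state_on {..<dA} (\<rho> x)" and pv: "povm_on {..<dB} M Lam"
    and err: "max_err_prob dA dB N M \<rho> Lam \<le> \<epsilon>" and M: "1 \<le> M"
    using assms(4) unfolding achievable_def by blast
  obtain n where k: "k = Suc n" using assms(3) by (cases k) auto
  have tr: "\<forall>x<M. trace_on {..<dA} (\<rho> x) = 1" using st by (simp add: is_state_on_def)
  have "feasible dA dB N \<epsilon> (Suc n) (1 / real M) (code_input_state M \<rho>) (code_op (Suc n) M \<rho> Lam)"
    unfolding feasible_def
  proof (intro conjI)
    show "psd_on (idxB dB (Suc n)) (\<lambda>bs bs'. complex_of_real (1 / real M) * delta bs bs' -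
        (\<Sum>y\<in>bitstrings (Suc n - 1). ptrace_A dA (code_op (Suc n) M \<rho> Lam (0 # y)) bs bs'))"
      by (rule psd_on_zero) (simp add: sum_ptrace_A_code_op_first_zero[OF tr pv])
    show "complex_of_real (1 - \<epsilon>) \<le> 1 / of_nat dB ^ (Suc n - 1) * (\<Sum>y\<in>bitstrings (Suc n - 1).
        trace_on (idxAB dA dB (Suc n))
          (mmult_on (idxAB dA dB (Suc n)) (code_op (Suc n) M \<rho> Lam (0 # y)) (choi_ext N)))"
      using code_op_success_ge[OF assms(2) st pv err M assms(1)] by simp
    show "\<forall>y\<in>bitstrings (Suc n). psd_on (idxAB dA dB (Suc n)) (code_op (Suc n) M \<rho> Lam y)"
      using psd_on_code_op[OF st pv] by blast
    show "\<forall>i\<in>{1..Suc n}. \<forall>y\<in>bitstrings (Suc n).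
        psd_on (idxAB dA dB (Suc n)) (ptrans i (code_op (Suc n) M \<rho> Lam y))"
      using psd_on_ptrans_code_op[OF st pv] by simp
    show "\<forall>y\<in>bitstrings (Suc n - 1). \<forall>bs\<in>idxB dB (Suc n). \<forall>bs'\<in>idxB dB (Suc n).
        (\<Sum>b\<in>{0, 1}. ptrace_A dA (code_op (Suc n) M \<rho> Lam (y @ [b])) bs bs') =
        1 / of_nat dB * (\<Sum>b\<in>{0, 1}. ptrace_ABk_tensor_I dA dB (code_op (Suc n) M \<rho> Lam (y @ [b])) bs bs')"
      using code_op_last_marginal[OF tr assms(1)] by (simp only: diff_Suc_1) blast
  qed (use M st in \<open>auto simp: idxAB_def sum_code_op code_input_state_is_state conj_perm_code_op\<close>)
  then show ?thesis unfolding k by blast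
qed

lemma log2_le_neg_log2:
  assumes "1 \<le> M" "0 \<le> L" "L \<le> ereal (1 / real M)"
  shows "ereal (log 2 (real M)) \<le> neg_log2 L"
proof (cases "L = 0")
  case False
  then obtain r where r: "L = ereal r" "0 < r" "r \<le> 1 / real M"
    using assms(2,3) by (cases L) auto
  then have "log 2 r \<le> log 2 (1 / real M)" using assms(1) by simp
  also have "\<dots> = - log 2 (real M)" using assms(1) by (simp add: log_divide)
  finally show ?thesis using r by (simp add: neg_log2_def)
qed (simp add: neg_log2_def)

theorem theorem1:
  fixes dA dB :: nat and N :: chan and \<epsilon> :: real and k :: nat
  assumes "0 < dA" and "0 < dB"
    and "quantum_channel dA dB N"
    and "0 \<le> \<epsilon>" and "\<epsilon> \<le> 1"
    and "1 \<le> k"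
  shows "one_shot_capacity dA dB N \<epsilon> \<le> sdp_bound dA dB N \<epsilon> k"
  unfolding one_shot_capacity_def sdp_bound_def
proof (rule SUP_least)
  fix M assume "M \<in> {M. achievable dA dB N \<epsilon> M}"
  then have ach: "achievable dA dB N \<epsilon> M" and M: "1 \<le> M" by (simp_all add: achievable_def)
  let ?L = "INF lam\<in>{lam. \<exists>\<rho> Q. feasible dA dB N \<epsilon> k lam \<rho> Q}. ereal lam"
  have "0 \<le> ?L" by (rule INF_greatest) (auto simp: feasible_def)
  moreover have "?L \<le> ereal (1 / real M)"
    using feasible_of_achievable[OF assms(2,3,6) ach] by (auto intro: INF_lower)
  ultimately show "ereal (log 2 (real M)) \<le> neg_log2 ?L" by (rule log2_le_neg_log2[OF M])
qed

end
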